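(* Let $p>1$ be an integer and let $u^{(p)}$ be the fixed point of the substitution $\varphi_p(L)=L^pS$, $\varphi_p(S)=M$, $\varphi_p(M)=L^{p-1}S$. If $MzM$ is a factor of $u^{(p)}$ with $|z|_M=0$, then $z=(L^pS)^p$, or $z=L^{p-1}S(L^pS)^p$, or $z=L^{p-1}S(L^pS)^{p-1}$. Consequently $p^2+p-1\le |z|\le p^2+2p$.
   Context: $u^{(p)}=\lim_{n\to\infty}\varphi_p^n(L)$. A factor is a finite contiguous subword; $|w|$ is the length and $|w|_a$ the number of occurrences of the letter $a$ in $w$; $w^k$ denotes $k$ concatenated copies of $w$. *)

theory Defs
  imports Main
begin

datatype letter = L | S | M

fun phi :: "nat \<Rightarrow> letter \<Rightarrow> letter list" where
  "phi p L = replicate p L @ [S]"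
| "phi p S = [M]"
| "phi p M = replicate (p - 1) L @ [S]"

definition phiw :: "nat \<Rightarrow> letter list \<Rightarrow> letter list" where
  "phiw p w = concat (map (phi p) w)"

text \<open>The fixed point u^(p) = lim phi_p^n(L), as an infinite word indexed from 0:
  the i-th letter is the eventual value of the i-th letter of phi_p^n(L).\<close>
definition u :: "nat \<Rightarrow> nat \<Rightarrow> letter" where
  "u p i = (THE c. \<exists>N. \<forall>n\<ge>N. i < length ((phiw p ^^ n) [L]) \<and> ((phiw p ^^ n) [L]) ! i = c)"

definition is_factor :: "'a list \<Rightarrow> (nat \<Rightarrow> 'a) \<Rightarrow> bool" where
  "is_factor w x \<longleftrightarrow> (\<exists>k. \<forall>j<length w. x (k + j) = w ! j)"

definition wpow :: "'a list \<Rightarrow> nat \<Rightarrow> 'a list" where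
  "wpow w k = concat (replicate k w)"

end

theory Submission
  imports Defs "HOL-Library.Sublist"
begin

text \<open>Every M of phi(w) is the image of an S of w, and every S of phi(w) ends the image of
  an L or an M. Hence a gap MzM of phi(phi(w)) with z free of M comes from a gap SyS of phi(w)
  with z = phi(y), and that gap in turn from a factor c v d of w with c, d in {L, M} and v a
  power of S. In the prefixes phi^n(L) every M follows an S and every S follows an L, which
  leaves y in {L^p, M L^p, M L^(p-1)}; applying phi gives the three values of z.\<close>

lemma concat_map_split_at_marker:
  assumes marker: "\<And>c. m \<in> set (f c) \<Longrightarrow> \<exists>x. f c = x @ [m] \<and> m \<notin> set x"
    and "concat (map f w) = a @ m # r"
  shows "\<exists>w1 c w2 x. w = w1 @ c # w2 \<and> f c = x @ [m]
           \<and> a = concat (map f w1) @ x \<and> r = concat (map f w2)"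
  using assms(2)
proof (induction w arbitrary: a)
  case Nil
  then show ?case by simp
next
  case (Cons c w)
  then have "f c @ concat (map f w) = a @ m # r" by simp
  then consider (inside) us where "f c = a @ m # us" "r = us @ concat (map f w)"
    | (later) us where "a = f c @ us" "concat (map f w) = us @ m # r"
    by (fastforce simp: append_eq_append_conv2 append_eq_Cons_conv)
  then show ?case
  proof cases
    case inside
    then obtain x where x: "f c = x @ [m]" "m \<notin> set x" using marker[of c] by auto
    with inside have "a = x \<and> us = []"
      by (auto simp: append_eq_append_conv2 append_eq_Cons_conv Cons_eq_append_conv)
    with inside x show ?thesis by (intro exI[of _ "[]"]) auto
  next
    case later
    then obtain w1 d w2 x where "w = w1 @ d # w2" "f d = x @ [m]"
        "us = concat (map f w1) @ x" "r = concat (map f w2)"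
      using Cons.IH by blast
    with later show ?thesis by (intro exI[of _ "c # w1"]) auto
  qed
qed

lemma successively_concat_map:
  assumes "\<And>c. f c \<noteq> []" "\<And>c. successively P (f c)"
    and "\<And>c d. Q c d \<Longrightarrow> P (last (f c)) (hd (f d))" "successively Q w"
  shows "successively P (concat (map f w))"
  using assms(4)
proof (induction w rule: induct_list012)
  case (3 c d w)
  then show ?case
    using assms(1-3) by (auto simp: successively_append_iff)
qed (use assms(2) in auto)

lemma phiw_Nil [simp]: "phiw p [] = []"
  by (simp add: phiw_def)

lemma phiw_Cons [simp]: "phiw p (c # w) = phi p c @ phiw p w"
  by (simp add: phiw_def)

lemma phiw_append [simp]: "phiw p (v @ w) = phiw p v @ phiw p w"
  by (simp add: phiw_def)

lemma phiw_replicate_L: "phiw p (replicate k L) = wpow (replicate p L @ [S]) k"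
  by (induction k) (auto simp: wpow_def)

lemma length_wpow: "length (wpow w k) = k * length w"
  by (simp add: wpow_def length_concat sum_list_replicate)

lemma prefix_phiw: "prefix v w \<Longrightarrow> prefix (phiw p v) (phiw p w)"
  by (auto elim!: prefixE)

lemma length_phiw_ge: "p > 0 \<Longrightarrow> length w \<le> length (phiw p w)"
proof (induction w)
  case (Cons c w)
  then show ?case by (cases c) auto
qed simp

definition phiL :: "nat \<Rightarrow> nat \<Rightarrow> letter list" where
  "phiL p n = (phiw p ^^ n) [L]"

lemma phiL_0 [simp]: "phiL p 0 = [L]"
  by (simp add: phiL_def)

lemma phiL_Suc [simp]: "phiL p (Suc n) = phiw p (phiL p n)"
  by (simp add: phiL_def)

lemma prefix_phiL_Suc: "p > 0 \<Longrightarrow> prefix (phiL p n) (phiL p (Suc n))"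
proof (induction n)
  case 0
  then show ?case by (cases p) auto
qed (simp add: prefix_phiw)

lemma prefix_phiL:
  assumes "p > 0" "n \<le> m"
  shows "prefix (phiL p n) (phiL p m)"
  using assms(2)
proof (induction m rule: dec_induct)
  case (step m)
  then show ?case using prefix_order.trans prefix_phiL_Suc[OF assms(1)] by blast
qed simp

lemma hd_phiL: "p > 0 \<Longrightarrow> \<exists>r. phiL p n = L # r"
  by (induction n) (auto simp: gr0_conv_Suc)

lemma length_phiL: "p > 0 \<Longrightarrow> n < length (phiL p n)"
proof (induction n)
  case (Suc n)
  obtain r where "phiL p n = L # r"
    using hd_phiL Suc.prems by fastforce
  with Suc length_phiw_ge[of p r] show ?case by auto
qed simp

lemma u_nth_phiL:
  assumes "p > 0" "i < length (phiL p n)"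
  shows "u p i = phiL p n ! i"
proof -
  have stable: "i < length (phiL p m) \<and> phiL p m ! i = phiL p n ! i" if "n \<le> m" for m
    using prefix_phiL[of p n m] that assms by (auto elim!: prefixE simp: nth_append)
  show ?thesis
    unfolding u_def phiL_def[symmetric]
  proof (rule the_equality)
    fix c assume "\<exists>N. \<forall>m\<ge>N. i < length (phiL p m) \<and> phiL p m ! i = c"
    then obtain N where "\<forall>m\<ge>N. phiL p m ! i = c" by blast
    with stable[of "max N n"] show "c = phiL p n ! i" by simp
  qed (use stable in blast)
qed

lemma factor_of_u_in_phiL:
  assumes "p > 0" "is_factor v (u p)"
  obtains n a b where "n \<ge> N" "phiL p n = a @ v @ b"
proof -
  obtain k where k: "\<forall>j<length v. u p (k + j) = v ! j"
    using assms(2) unfolding is_factor_def by blast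
  define n where "n = N + k + length v"
  have long: "k + length v \<le> length (phiL p n)"
    using length_phiL[OF assms(1), of n] unfolding n_def by simp
  have "phiL p n ! (k + j) = v ! j" if "j < length v" for j
    using k long that u_nth_phiL[OF assms(1), of "k + j" n] by simp
  then have "take (length v) (drop k (phiL p n)) = v"
    using long by (intro nth_equalityI) auto
  then have "phiL p n = take k (phiL p n) @ v @ drop (length v) (drop k (phiL p n))"
    by (metis append_take_drop_id)
  then show thesis using that[of n] n_def by simp
qed

lemma phi_marker:
  assumes "m \<noteq> L" "m \<in> set (phi p c)"
  shows "\<exists>x. phi p c = x @ [m] \<and> m \<notin> set x"
  using assms by (cases c) auto

lemma phiw_split_at_marker:
  assumes "m \<noteq> L" "phiw p w = a @ m # r"
  shows "\<exists>w1 c w2 x. w = w1 @ c # w2 \<and> phi p c = x @ [m]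
           \<and> a = phiw p w1 @ x \<and> r = phiw p w2"
  using concat_map_split_at_marker[of m "phi p"] phi_marker assms unfolding phiw_def by blast

lemma desubstitute_M_gap:
  assumes "M \<notin> set z" "phiw p w = a @ M # z @ M # b"
  obtains w1 y w2 where "w = w1 @ S # y @ S # w2" "phiw p y = z" "S \<notin> set y"
proof -
  obtain w1 c w2 x where w: "w = w1 @ c # w2" "phi p c = x @ [M]" "phiw p w2 = z @ M # b"
    using phiw_split_at_marker[OF _ assms(2)] by auto
  obtain y d w3 x' where w2: "w2 = y @ d # w3" "phi p d = x' @ [M]" "z = phiw p y @ x'"
    using phiw_split_at_marker[OF _ w(3)] by auto
  have "c = S" "d = S" "x' = []"
    using w(2) w2(2) by (cases c; cases d; auto)+
  moreover have "S \<notin> set y"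
    using assms(1) w2(3) by (auto simp: phiw_def)
  ultimately show thesis using that w w2 by simp
qed

definition admissible_pair :: "letter \<Rightarrow> letter \<Rightarrow> bool" where
  "admissible_pair a b \<longleftrightarrow> (b = M \<longrightarrow> a = S) \<and> (b = S \<longrightarrow> a = L)"

lemma successively_admissible_replicate_L_S:
  "k > 0 \<Longrightarrow> successively admissible_pair (replicate k L @ [S])"
proof (induction k)
  case (Suc k)
  then show ?case
    by (cases k) (auto simp: admissible_pair_def)
qed simp

lemma successively_admissible_phiw:
  assumes "p > 1" "successively admissible_pair w"
  shows "successively admissible_pair (phiw p w)"
  unfolding phiw_def
proof (rule successively_concat_map[OF _ _ _ assms(2)])
  fix c
  show "phi p c \<noteq> []" by (cases c) auto
  show "successively admissible_pair (phi p c)"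
    using assms(1) by (cases c) (auto intro: successively_admissible_replicate_L_S)
next
  fix c d
  have "hd (phi p d) = (if d = S then M else L)"
    using assms(1) by (cases d) (auto simp: hd_append)
  moreover assume "admissible_pair c d"
  ultimately show "admissible_pair (last (phi p c)) (hd (phi p d))"
    by (cases c; cases d) (auto simp: admissible_pair_def)
qed

lemma successively_admissible_phiL:
  "p > 1 \<Longrightarrow> successively admissible_pair (phiL p n)"
  by (induction n) (simp_all add: successively_admissible_phiw)

lemma desubstitute_S_gap:
  assumes "p > 1" "successively admissible_pair w" "S \<notin> set y"
    and "phiw p w = a @ S # y @ S # b"
  shows "y = replicate p L \<or> y = M # replicate p L \<or> y = M # replicate (p - 1) L"
proof -
  obtain w1 c w2 x where w: "w = w1 @ c # w2" "phi p c = x @ [S]" "phiw p w2 = y @ S # b"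
    using phiw_split_at_marker[OF _ assms(4)] by auto
  obtain v d w3 x' where w2: "w2 = v @ d # w3" "phi p d = x' @ [S]" "y = phiw p v @ x'"
    using phiw_split_at_marker[OF _ w(3)] by auto
  have "c \<noteq> S" "d \<noteq> S"
    using w(2) w2(2) by auto
  have v_S: "set v \<subseteq> {S}"
  proof
    fix e assume "e \<in> set v"
    then have "set (phi p e) \<subseteq> set y" using w2(3) by (auto simp: phiw_def)
    with assms(3) show "e \<in> {S}" by (cases e) auto
  qed
  have "successively admissible_pair (c # v @ d # w3)"
    using assms(2) w w2 by (simp add: successively_append_iff)
  \<comment> \<open>S never follows S and M never follows L or M: so v has at most one letter and d = M needs v = [S]\<close>
  then consider "v = []" "d = L" | "v = [S]"
    using \<open>c \<noteq> S\<close> \<open>d \<noteq> S\<close> v_S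
    by (cases v rule: remdups_adj.cases; cases d) (auto simp: admissible_pair_def)
  then show ?thesis
  proof cases
    case 1
    then show ?thesis using w2 by simp
  next
    case 2
    then show ?thesis using w2 \<open>d \<noteq> S\<close> by (cases d) auto
  qed
qed

lemma M_return_words:
  assumes "p > 1" "is_factor ([M] @ z @ [M]) (u p)" "M \<notin> set z"
  shows "z = wpow (replicate p L @ [S]) p
    \<or> z = replicate (p - 1) L @ [S] @ wpow (replicate p L @ [S]) p
    \<or> z = replicate (p - 1) L @ [S] @ wpow (replicate p L @ [S]) (p - 1)"
proof -
  obtain n a b where "n \<ge> 2" and factor: "phiL p n = a @ ([M] @ z @ [M]) @ b"
    by (rule factor_of_u_in_phiL[OF _ assms(2)]) (use assms(1) in simp_all)
  then obtain k where "n = Suc (Suc k)"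
    using Suc_diff_le[of 2 n] by (intro that[of "n - 2"]) simp
  with factor have "phiw p (phiw p (phiL p k)) = a @ M # z @ M # b"
    by (simp only: phiL_Suc append_assoc append_Cons append_Nil)
  then obtain w1 y w2 where
    y: "phiw p (phiL p k) = w1 @ S # y @ S # w2" "phiw p y = z" "S \<notin> set y"
    by (rule desubstitute_M_gap[OF assms(3)])
  have "y = replicate p L \<or> y = M # replicate p L \<or> y = M # replicate (p - 1) L"
    using desubstitute_S_gap[OF assms(1) successively_admissible_phiL[OF assms(1)] y(3,1)] .
  then show ?thesis
    using y(2) by (auto simp: phiw_replicate_L)
qed

theorem mainTheorem5:
  fixes p :: nat and z :: "letter list"
  assumes "p > 1"
    and "is_factor ([M] @ z @ [M]) (u p)"
    and "count_list z M = 0"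
  shows "(z = wpow (replicate p L @ [S]) p
          \<or> z = replicate (p - 1) L @ [S] @ wpow (replicate p L @ [S]) p
          \<or> z = replicate (p - 1) L @ [S] @ wpow (replicate p L @ [S]) (p - 1))
         \<and> p^2 + p - 1 \<le> length z \<and> length z \<le> p^2 + 2*p"
proof -
  have "M \<notin> set z"
    using assms(3) by (simp add: count_list_0_iff)
  then have z: "z = wpow (replicate p L @ [S]) p
    \<or> z = replicate (p - 1) L @ [S] @ wpow (replicate p L @ [S]) p
    \<or> z = replicate (p - 1) L @ [S] @ wpow (replicate p L @ [S]) (p - 1)"
    by (rule M_return_words[OF assms(1,2)])
  obtain q where "p = Suc q"
    using assms(1) by (cases p) auto
  then have "p^2 + p - 1 \<le> length z \<and> length z \<le> p^2 + 2*p"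
    using z by (auto simp: length_wpow power2_eq_square)
  with z show ?thesis by blast
qed

end
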